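(* For any POVM $\{\mathcal{M}_i\}_{i\in\mathcal{O}}$ on $\mathcal{H}$, \[2K^*(\{\mathcal{M}_i\}_{i\in\mathcal{O}})=\max_{|\psi\rangle\perp|\phi\rangle}\sum_{i\in\mathcal{O}}|\mathrm{tr}(\mathcal{M}_i(\psi-\phi))|,\] where the maximum is over pairs of unit vectors with $\langle\psi|\phi\rangle=0$, and $\psi=|\psi\rangle\langle\psi|$, $\phi=|\phi\rangle\langle\phi|$.
   Context: $\mathcal{H}$ is a finite-dimensional Hilbert space of dimension at least 2, $\mathcal{D}(\mathcal{H})$ its density matrices. A POVM is a finite family $\{\mathcal{M}_i\}_{i\in\mathcal{O}}$ of positive semidefinite matrices with $\sum_i\mathcal{M}_i=I$, and $K^*(\{\mathcal{M}_i\}_{i\in\mathcal{O}})=\max_{\rho,\sigma\in\mathcal{D}(\mathcal{H})}\frac12\sum_{i\in\mathcal{O}}|\mathrm{tr}(\mathcal{M}_i(\rho-\sigma))|$. *)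

theory Defs
  imports "HOL-Analysis.Analysis"
begin

text \<open>Matrices on H = C^n are represented as complex^'n^'n, with 'n a finite index type.\<close>

definition hermitian_mat :: "complex^'n^'n \<Rightarrow> bool" where
  "hermitian_mat A \<longleftrightarrow> (\<forall>i j. A $ i $ j = cnj (A $ j $ i))"

definition psd_mat :: "complex^'n^'n \<Rightarrow> bool" where
  "psd_mat A \<longleftrightarrow> hermitian_mat A \<and>
     (\<forall>v :: complex^'n. 0 \<le> Re (\<Sum>i\<in>UNIV. \<Sum>j\<in>UNIV. cnj (v $ i) * A $ i $ j * v $ j))"

definition density_mats :: "(complex^'n^'n) set" where
  "density_mats = {\<rho>. psd_mat \<rho> \<and> trace \<rho> = 1}"

definition is_POVM :: "'i set \<Rightarrow> ('i \<Rightarrow> complex^'n^'n) \<Rightarrow> bool" where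
  "is_POVM Obs M \<longleftrightarrow> finite Obs \<and> (\<forall>i\<in>Obs. psd_mat (M i)) \<and> (\<Sum>i\<in>Obs. M i) = mat 1"

definition Kstar :: "'i set \<Rightarrow> ('i \<Rightarrow> complex^'n^'n) \<Rightarrow> real" where
  "Kstar Obs M = (SUP p \<in> density_mats \<times> density_mats.
      (1/2) * (\<Sum>i\<in>Obs. cmod (trace (M i ** (fst p - snd p)))))"

text \<open>inner product <psi|phi>, linear in the second argument\<close>
definition braket :: "complex^'n \<Rightarrow> complex^'n \<Rightarrow> complex" where
  "braket \<psi> \<phi> = (\<Sum>i\<in>UNIV. cnj (\<psi> $ i) * \<phi> $ i)"

definition proj :: "complex^'n \<Rightarrow> complex^'n^'n" where
  "proj \<psi> = (\<chi> i j. \<psi> $ i * cnj (\<psi> $ j))"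

end

theory Submission
  imports Defs
begin

(* Each tr(M_i (rho - sigma)) is real, so the sum of their absolute values equals tr(A_s (rho - sigma))
   for A_s = sum_i s_i M_i and a suitable sign vector s in {-1,1}^O. For Hermitian A and density
   matrices rho, sigma we have lambda_min <= tr(A sigma) and tr(A rho) <= lambda_max, because tr(C B) >= 0
   for positive semidefinite C and B; both bounds are attained at pure states of extremal eigenvectors,
   which can be chosen orthogonal. As tr(A_s K) <= sum_i |tr(M_i K)| for every K, each pair of density
   matrices is dominated by one of finitely many orthogonal pure pairs (one per sign vector), and the
   best of these attains 2 K*. *)

section \<open>Sesquilinear forms of matrices\<close>

definition sesq_form :: "complex^'n^'n \<Rightarrow> complex^'n \<Rightarrow> complex^'n \<Rightarrow> complex" where
  "sesq_form A v w = (\<Sum>i\<in>UNIV. \<Sum>j\<in>UNIV. cnj (v $ i) * A $ i $ j * w $ j)"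

lemma psd_mat_iff: "psd_mat A \<longleftrightarrow> hermitian_mat A \<and> (\<forall>v. 0 \<le> Re (sesq_form A v v))"
  by (simp add: psd_mat_def sesq_form_def)

lemma hermitian_matD: "hermitian_mat A \<Longrightarrow> cnj (A $ i $ j) = A $ j $ i"
  unfolding hermitian_mat_def by (metis complex_cnj_cnj)

(* hermitian_mat_def must not reach simp for a hypothesis: the symmetry equation loops.
   hermitian_matD orients it. *)
lemma hermitian_mat_diff: "hermitian_mat A \<Longrightarrow> hermitian_mat B \<Longrightarrow> hermitian_mat (A - B)"
  by (simp add: hermitian_mat_def[of "A - B"] hermitian_matD)

lemma hermitian_mat_uminus: "hermitian_mat A \<Longrightarrow> hermitian_mat (- A)"
  by (simp add: hermitian_mat_def[of "- A"] hermitian_matD)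

lemma hermitian_mat_scaleR: "hermitian_mat A \<Longrightarrow> hermitian_mat (c *\<^sub>R A)"
  by (simp add: hermitian_mat_def[of "c *\<^sub>R A"] hermitian_matD complex_cnj_scaleR)

lemma hermitian_mat_1: "hermitian_mat (mat 1)"
  by (simp add: hermitian_mat_def mat_def)

lemma hermitian_mat_sum: "(\<And>x. x \<in> S \<Longrightarrow> hermitian_mat (f x)) \<Longrightarrow> hermitian_mat (\<Sum>x\<in>S. f x)"
  by (simp add: hermitian_mat_def[of "sum f S"] hermitian_matD)

lemma trace_matrix_mult: "trace (A ** B) = (\<Sum>i\<in>UNIV. \<Sum>j\<in>UNIV. A $ i $ j * B $ j $ i)"
  by (simp add: trace_def matrix_matrix_mult_def)

lemma trace_mult_diff_right:
  fixes A B C :: "complex^'n^'n"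
  shows "trace (A ** (B - C)) = trace (A ** B) - trace (A ** C)"
  by (simp add: trace_matrix_mult right_diff_distrib sum_subtractf)

lemma trace_mult_uminus_left: "trace ((- A) ** B) = - trace (A ** (B :: complex^'n^'n))"
  by (simp add: trace_matrix_mult sum_negf)

lemma trace_mult_hermitian_real:
  assumes "hermitian_mat A" "hermitian_mat B" shows "Im (trace (A ** B)) = 0"
proof -
  have "cnj (trace (A ** B)) = (\<Sum>i\<in>UNIV. \<Sum>j\<in>UNIV. A $ j $ i * B $ i $ j)"
    by (simp add: trace_matrix_mult hermitian_matD[OF assms(1)] hermitian_matD[OF assms(2)])
  also have "\<dots> = trace (A ** B)"
    unfolding trace_matrix_mult by (subst sum.swap) simp
  finally show ?thesis by (metis Reals_cnj_iff complex_is_Real_iff)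
qed

lemma norm_vec_power2: "(norm (v::complex^'n))^2 = (\<Sum>i\<in>UNIV. (cmod (v$i))^2)"
  by (simp add: norm_vec_def L2_set_def sum_nonneg)

lemma braket_self: "braket v v = of_real ((norm v)^2)"
  unfolding braket_def norm_vec_power2 of_real_sum
  by (intro sum.cong refl) (metis complex_norm_square mult.commute)

lemma cnj_braket: "cnj (braket v w) = braket w v"
  by (simp add: braket_def mult.commute)

lemma cnj_sesq_form:
  assumes "hermitian_mat A" shows "cnj (sesq_form A v w) = sesq_form A w v"
proof -
  have "cnj (sesq_form A v w) = (\<Sum>i\<in>UNIV. \<Sum>j\<in>UNIV. v $ i * A $ j $ i * cnj (w $ j))"
    unfolding sesq_form_def by (simp add: hermitian_matD[OF assms])
  also have "\<dots> = sesq_form A w v"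
    unfolding sesq_form_def by (subst sum.swap) (simp add: mult_ac)
  finally show ?thesis .
qed

lemma sesq_form_self_real:
  assumes "hermitian_mat A" shows "sesq_form A v v = of_real (Re (sesq_form A v v))"
  using cnj_sesq_form[OF assms, of v v] by (metis Reals_cnj_iff of_real_Re)

lemma sesq_form_diff_left: "sesq_form A (u - v) w = sesq_form A u w - sesq_form A v w"
  by (simp add: sesq_form_def algebra_simps sum_subtractf)

lemma sesq_form_diff_right: "sesq_form A w (u - v) = sesq_form A w u - sesq_form A w v"
  by (simp add: sesq_form_def algebra_simps sum_subtractf)

lemma sesq_form_smult_left: "sesq_form A (c *s u) w = cnj c * sesq_form A u w"
  by (simp add: sesq_form_def algebra_simps sum_distrib_left)

lemma sesq_form_smult_right: "sesq_form A w (c *s u) = c * sesq_form A w u"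
  by (simp add: sesq_form_def algebra_simps sum_distrib_left)

lemma scaleR_vec_complex: "c *\<^sub>R (v :: complex^'n) = of_real c *s v"
  by (simp add: vec_eq_iff) (simp add: scaleR_conv_of_real)

lemma sesq_form_scaleR_left: "sesq_form A (c *\<^sub>R u) w = of_real c * sesq_form A u w"
  by (simp add: scaleR_vec_complex sesq_form_smult_left)

lemma sesq_form_scaleR_right: "sesq_form A w (c *\<^sub>R u) = of_real c * sesq_form A w u"
  by (simp add: scaleR_vec_complex sesq_form_smult_right)

lemma sesq_form_uminus: "sesq_form (- A) v w = - sesq_form A v w"
  by (simp add: sesq_form_def sum_negf)

lemma sesq_form_diff: "sesq_form (A - B) v w = sesq_form A v w - sesq_form B v w"
  by (simp add: sesq_form_def algebra_simps sum_subtractf)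

lemma sesq_form_scaleR: "sesq_form (c *\<^sub>R A) v w = of_real c * sesq_form A v w"
  by (simp add: sesq_form_def scaleR_vec_complex algebra_simps sum_distrib_left)

lemma sesq_form_mat_1: "sesq_form (mat 1) v w = braket v w"
proof -
  have "cnj (v $ i) * mat 1 $ i $ j * w $ j = (if i = j then cnj (v $ i) * w $ j else 0)" for i j
    by (simp add: mat_def)
  then show ?thesis by (simp add: sesq_form_def braket_def)
qed

lemma sesq_form_axis_left: "sesq_form A (axis k 1) v = (\<Sum>j\<in>UNIV. A $ k $ j * v $ j)"
proof -
  have "(\<Sum>j\<in>UNIV. cnj (axis k 1 $ i) * A $ i $ j * v $ j) =
      (if i = k then \<Sum>j\<in>UNIV. A $ k $ j * v $ j else 0)" for i
    by (simp add: axis_def)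
  then show ?thesis by (simp add: sesq_form_def)
qed

lemma sesq_form_axis_right: "sesq_form A v (axis k 1) = (\<Sum>i\<in>UNIV. cnj (v $ i) * A $ i $ k)"
proof -
  have "cnj (v $ i) * A $ i $ j * axis k 1 $ j = (if j = k then cnj (v $ i) * A $ i $ k else 0)" for i j
    by (simp add: axis_def)
  then show ?thesis by (simp add: sesq_form_def)
qed

lemma sesq_form_axis: "sesq_form A (axis i 1) (axis j 1) = A $ i $ j"
proof -
  have "A $ i $ l * axis j 1 $ l = (if l = j then A $ i $ j else 0)" for l
    by (simp add: axis_def)
  then show ?thesis by (simp add: sesq_form_axis_left)
qed

lemma Re_sesq_form_diff_smult:
  assumes "hermitian_mat C"
  shows "Re (sesq_form C (y - z *s x) (y - z *s x)) =
         Re (sesq_form C y y) - 2 * Re (cnj z * sesq_form C x y) + (cmod z)^2 * Re (sesq_form C x x)"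
proof -
  have yx: "sesq_form C y x = cnj (sesq_form C x y)" using cnj_sesq_form[OF assms, of x y] by simp
  have zz: "cnj z * z = of_real ((cmod z)^2)" by (metis complex_norm_square mult.commute)
  have "sesq_form C (y - z *s x) (y - z *s x) = sesq_form C y y - z * cnj (sesq_form C x y)
      - cnj z * sesq_form C x y + (cnj z * z) * sesq_form C x x"
    by (simp add: sesq_form_diff_left sesq_form_diff_right sesq_form_smult_left sesq_form_smult_right
        yx algebra_simps)
  also have "\<dots> = sesq_form C y y - of_real (2 * Re (cnj z * sesq_form C x y))
      + of_real ((cmod z)^2 * Re (sesq_form C x x))"
    by (subst (1 2) sesq_form_self_real[OF assms], simp only: zz) (simp add: complex_eq_iff)
  finally show ?thesis by simp
qed

lemma quadratic_nonneg_imp_le: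
  fixes a b c :: real
  assumes "0 \<le> a" and nonneg: "\<And>t. 0 \<le> c - 2 * t * b + t^2 * b * a"
  shows "b \<le> a * c"
proof (cases "0 < a")
  case True
  then show ?thesis using nonneg[of "1 / a"] by (simp add: power2_eq_square field_simps)
next
  case False
  then have "a = 0" using assms(1) by simp
  show ?thesis
  proof (rule ccontr)
    assume "\<not> b \<le> a * c"
    then have "0 < b" using \<open>a = 0\<close> by simp
    then show False using nonneg[of "(c + 1) / (2 * b)"] \<open>a = 0\<close> by simp
  qed
qed

(* Positivity of the form at y - t <x|Cy> x is a nonnegative quadratic in the real t. *)
lemma psd_cauchy_schwarz:
  assumes "psd_mat C"
  shows "(cmod (sesq_form C x y))^2 \<le> Re (sesq_form C x x) * Re (sesq_form C y y)"
proof (rule quadratic_nonneg_imp_le)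
  fix t :: real
  define z where "z = of_real t * sesq_form C x y"
  have "cnj (sesq_form C x y) * sesq_form C x y = of_real ((cmod (sesq_form C x y))^2)"
    by (metis complex_norm_square mult.commute)
  then have "cnj z * sesq_form C x y = of_real (t * (cmod (sesq_form C x y))^2)"
    unfolding z_def by (simp add: mult.assoc)
  moreover have "(cmod z)^2 = t^2 * (cmod (sesq_form C x y))^2"
    unfolding z_def by (simp add: norm_mult power_mult_distrib)
  moreover have "0 \<le> Re (sesq_form C (y - z *s x) (y - z *s x))"
    using assms by (simp add: psd_mat_iff)
  ultimately show "0 \<le> Re (sesq_form C y y) - 2 * t * (cmod (sesq_form C x y))^2
      + t^2 * (cmod (sesq_form C x y))^2 * Re (sesq_form C x x)"
    using Re_sesq_form_diff_smult[of C y z x] assms by (simp add: psd_mat_iff mult_ac)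
qed (use assms in \<open>simp add: psd_mat_iff\<close>)

lemma psd_diag_nonneg: "psd_mat A \<Longrightarrow> 0 \<le> Re (A $ i $ i)"
  using sesq_form_axis[of A i i] by (metis psd_mat_iff)

lemma psd_diag_real: "psd_mat A \<Longrightarrow> A $ i $ i = of_real (Re (A $ i $ i))"
  using sesq_form_self_real[of A "axis i 1"] by (simp add: psd_mat_iff sesq_form_axis)

lemma psd_zero_diag_row: "psd_mat A \<Longrightarrow> A $ i $ i = 0 \<Longrightarrow> A $ i $ j = 0"
  using psd_cauchy_schwarz[of A "axis i 1" "axis j 1"] by (simp add: sesq_form_axis)

section \<open>Positivity of the trace pairing\<close>

text \<open>One step of a Cholesky factorisation: removing the rank-one part generated by the \<open>k\<close>-th
  column leaves a PSD matrix with one fewer nonzero diagonal entry, and splits \<open>tr (C A)\<close> into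
  \<open>tr (C A')\<close> plus a nonnegative value of the form of \<open>C\<close>. Induction on that number of
  entries gives \<open>tr (C A) \<ge> 0\<close>.\<close>

definition schur_step :: "complex^'n^'n \<Rightarrow> 'n \<Rightarrow> complex^'n^'n" where
  "schur_step A k = (\<chi> i j. A $ i $ j - A $ i $ k * A $ k $ j / A $ k $ k)"

lemma trace_mult_schur_step:
  assumes "hermitian_mat A"
  shows "trace (C ** A) = trace (C ** schur_step A k) + sesq_form C (column k A) (column k A) / A $ k $ k"
proof -
  have "sesq_form C (column k A) (column k A) / A $ k $ k =
      (\<Sum>i\<in>UNIV. \<Sum>j\<in>UNIV. C $ i $ j * (A $ j $ k * A $ k $ i / A $ k $ k))"
    by (simp add: sesq_form_def column_def hermitian_matD[OF assms] sum_divide_distrib mult_ac)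
  then show ?thesis
    by (simp add: trace_matrix_mult schur_step_def right_diff_distrib sum_subtractf)
qed

lemma hermitian_schur_step:
  assumes "psd_mat A" shows "hermitian_mat (schur_step A k)"
proof -
  have "cnj (A $ i $ j) = A $ j $ i" for i j using assms by (simp add: psd_mat_def hermitian_matD)
  moreover have "cnj (A $ k $ k) = A $ k $ k" by (metis psd_diag_real[OF assms] complex_cnj_complex_of_real)
  ultimately show ?thesis unfolding hermitian_mat_def schur_step_def by (simp add: mult.commute)
qed

lemma psd_schur_step:
  assumes A: "psd_mat A" and pivot: "A $ k $ k \<noteq> 0" shows "psd_mat (schur_step A k)"
proof -
  define r where "r = Re (A $ k $ k)"
  have Akk: "A $ k $ k = of_real r" unfolding r_def by (rule psd_diag_real[OF A])
  have "r \<noteq> 0" using pivot Akk by auto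
  then have "0 < r" using psd_diag_nonneg[OF A, of k] unfolding r_def by linarith
  have "0 \<le> Re (sesq_form (schur_step A k) v v)" for v
  proof -
    define b where "b = sesq_form A v (axis k 1)"
    have "sesq_form A (axis k 1) v = cnj b"
      unfolding b_def using cnj_sesq_form[of A v "axis k 1"] A by (simp add: psd_mat_def)
    have "sesq_form (schur_step A k) v v = sesq_form A v v -
        (\<Sum>i\<in>UNIV. \<Sum>j\<in>UNIV. (cnj (v $ i) * A $ i $ k) * (A $ k $ j * v $ j)) / A $ k $ k"
      unfolding sesq_form_def schur_step_def
      by (simp add: right_diff_distrib left_diff_distrib sum_subtractf sum_divide_distrib mult_ac)
    also have "(\<Sum>i\<in>UNIV. \<Sum>j\<in>UNIV. (cnj (v $ i) * A $ i $ k) * (A $ k $ j * v $ j)) =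
        sesq_form A v (axis k 1) * sesq_form A (axis k 1) v"
      unfolding sesq_form_axis_right sesq_form_axis_left by (simp add: sum_product)
    also have "\<dots> = b * cnj b" using \<open>sesq_form A (axis k 1) v = cnj b\<close> b_def by simp
    also have "sesq_form A v v - b * cnj b / A $ k $ k = sesq_form A v v - of_real ((cmod b)^2 / r)"
      by (simp add: Akk) (metis complex_norm_square of_real_power)
    finally have "Re (sesq_form (schur_step A k) v v) = Re (sesq_form A v v) - (cmod b)^2 / r"
      by simp
    moreover have "(cmod b)^2 \<le> Re (sesq_form A v v) * r"
      using psd_cauchy_schwarz[OF A, of v "axis k 1"] unfolding b_def r_def by (simp add: sesq_form_axis)
    ultimately show ?thesis using \<open>0 < r\<close> by (simp add: divide_le_eq)
  qed
  then show ?thesis using hermitian_schur_step[OF A] by (simp add: psd_mat_iff)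
qed

lemma schur_step_diag_support:
  assumes "psd_mat A" "A $ k $ k \<noteq> 0"
  shows "{i. schur_step A k $ i $ i \<noteq> 0} \<subseteq> {i. A $ i $ i \<noteq> 0} - {k}"
  using assms psd_zero_diag_row[OF assms(1)] by (auto simp: schur_step_def)

lemma psd_trace_mult_nonneg:
  assumes "psd_mat C" "psd_mat A" shows "0 \<le> Re (trace (C ** A))"
  using assms(2)
proof (induction "card {i. A $ i $ i \<noteq> 0}" arbitrary: A rule: less_induct)
  case less
  show ?case
  proof (cases "\<exists>k. A $ k $ k \<noteq> 0")
    case False
    then have "A = 0" using psd_zero_diag_row[OF less.prems] by (auto simp: vec_eq_iff)
    then show ?thesis by (simp add: trace_def)
  next
    case True
    then obtain k where pivot: "A $ k $ k \<noteq> 0" by blast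
    have "card {i. schur_step A k $ i $ i \<noteq> 0} \<le> card ({i. A $ i $ i \<noteq> 0} - {k})"
      by (rule card_mono[OF _ schur_step_diag_support[OF less.prems pivot]]) simp
    also have "\<dots> < card {i. A $ i $ i \<noteq> 0}"
      using pivot by (intro card_Diff1_less) auto
    finally have "0 \<le> Re (trace (C ** schur_step A k))"
      using less.hyps psd_schur_step[OF less.prems pivot] by blast
    moreover have "0 \<le> Re (sesq_form C (column k A) (column k A) / A $ k $ k)"
      using assms(1) psd_diag_nonneg[OF less.prems, of k]
      by (subst psd_diag_real[OF less.prems]) (simp add: psd_mat_iff Re_divide_of_real)
    ultimately show ?thesis
      using trace_mult_schur_step[of A C k] less.prems by (simp add: psd_mat_def)
  qed
qed

section \<open>Extremal Rayleigh quotients\<close>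

lemma trace_mult_scaleR_one_minus:
  fixes A B :: "complex^'n^'n"
  shows "trace ((c *\<^sub>R mat 1 - A) ** B) = of_real c * trace B - trace (A ** B)"
proof -
  have "(c *\<^sub>R mat 1 - A) $ i $ j * B $ j $ i =
      (if j = i then of_real c * B $ j $ i else 0) - A $ i $ j * B $ j $ i" for i j
    by (simp add: mat_def left_diff_distrib) (simp add: scaleR_conv_of_real)
  then show ?thesis unfolding trace_matrix_mult by (simp add: sum_subtractf sum_distrib_left trace_def)
qed

lemma psd_scaleR_one_minus:
  assumes "hermitian_mat A" and bound: "\<And>v. Re (sesq_form A v v) \<le> l * (norm v)^2"
  shows "psd_mat (l *\<^sub>R mat 1 - A)"
  unfolding psd_mat_iff
proof
  show "hermitian_mat (l *\<^sub>R mat 1 - A)"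
    by (intro hermitian_mat_diff hermitian_mat_scaleR hermitian_mat_1 assms(1))
  show "\<forall>v. 0 \<le> Re (sesq_form (l *\<^sub>R mat 1 - A) v v)"
    using bound by (simp add: sesq_form_diff sesq_form_scaleR sesq_form_mat_1 braket_self)
qed

lemma Re_trace_density_le:
  assumes "hermitian_mat A" "\<And>v. Re (sesq_form A v v) \<le> l * (norm v)^2" "\<rho> \<in> density_mats"
  shows "Re (trace (A ** \<rho>)) \<le> l"
  using psd_trace_mult_nonneg[OF psd_scaleR_one_minus[OF assms(1,2)], of \<rho>] assms(3)
  by (simp add: density_mats_def trace_mult_scaleR_one_minus)

lemma Re_trace_density_ge:
  assumes "hermitian_mat A" "\<And>v. m * (norm v)^2 \<le> Re (sesq_form A v v)" "\<rho> \<in> density_mats"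
  shows "m \<le> Re (trace (A ** \<rho>))"
  using Re_trace_density_le[OF hermitian_mat_uminus[OF assms(1)], of "- m" \<rho>] assms(2,3)
  by (simp add: sesq_form_uminus trace_mult_uminus_left)

lemma psd_kernel:
  assumes "psd_mat C" "Re (sesq_form C v v) = 0" shows "sesq_form C w v = 0"
  using psd_cauchy_schwarz[OF assms(1), of w v] assms(2) by simp

lemma rayleigh_maximizer_eigenvector:
  assumes "hermitian_mat A" "\<And>v. Re (sesq_form A v v) \<le> l * (norm v)^2"
    and "norm \<psi> = 1" "Re (sesq_form A \<psi> \<psi>) = l"
  shows "sesq_form A w \<psi> = of_real l * braket w \<psi>"
proof -
  have "Re (sesq_form (l *\<^sub>R mat 1 - A) \<psi> \<psi>) = 0"
    using assms(3,4) by (simp add: sesq_form_diff sesq_form_scaleR sesq_form_mat_1 braket_self)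
  from psd_kernel[OF psd_scaleR_one_minus[OF assms(1,2)] this, of w] show ?thesis
    by (simp add: sesq_form_diff sesq_form_scaleR sesq_form_mat_1)
qed

lemma eigenvectors_orthogonal:
  assumes "hermitian_mat A"
    and "\<And>w. sesq_form A w \<psi> = of_real l * braket w \<psi>"
    and "\<And>w. sesq_form A w \<phi> = of_real m * braket w \<phi>"
    and "l \<noteq> m"
  shows "braket \<psi> \<phi> = 0"
proof -
  have "of_real l * braket \<phi> \<psi> = cnj (sesq_form A \<psi> \<phi>)"
    using assms(2)[of \<phi>] cnj_sesq_form[OF assms(1), of \<psi> \<phi>] by simp
  also have "\<dots> = of_real m * braket \<phi> \<psi>" by (simp add: assms(3) cnj_braket)
  finally have "braket \<phi> \<psi> = 0" using assms(4) by simp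
  then show ?thesis by (metis cnj_braket complex_cnj_zero)
qed

lemma Re_sesq_form_sgn: "Re (sesq_form A v v) = (norm v)^2 * Re (sesq_form A (sgn v) (sgn v))"
proof (cases "v = 0")
  case False
  then show ?thesis
    unfolding sgn_div_norm sesq_form_scaleR_left sesq_form_scaleR_right
    by (simp add: power2_eq_square)
qed (simp add: sesq_form_def)

lemma rayleigh_maximum:
  obtains \<psi> :: "complex^'n" where "norm \<psi> = 1"
    "\<And>v. Re (sesq_form A v v) \<le> Re (sesq_form A \<psi> \<psi>) * (norm v)^2"
proof -
  have cont: "continuous_on (sphere 0 1) (\<lambda>v::complex^'n. Re (sesq_form A v v))"
    unfolding sesq_form_def by (intro continuous_intros)
  have "sgn (axis undefined 1) \<in> sphere (0::complex^'n) 1"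
    by (simp add: norm_sgn axis_eq_0_iff)
  then have "sphere (0::complex^'n) 1 \<noteq> {}" by blast
  from continuous_attains_sup[OF compact_sphere this cont] obtain \<psi> where \<psi>: "\<psi> \<in> sphere 0 1"
    and max: "\<And>u. u \<in> sphere 0 1 \<Longrightarrow> Re (sesq_form A u u) \<le> Re (sesq_form A \<psi> \<psi>)"
    by blast
  have "Re (sesq_form A v v) \<le> Re (sesq_form A \<psi> \<psi>) * (norm v)^2" for v
  proof (cases "v = 0")
    case False
    then have "Re (sesq_form A (sgn v) (sgn v)) \<le> Re (sesq_form A \<psi> \<psi>)"
      by (intro max) (simp add: norm_sgn)
    then have "(norm v)^2 * Re (sesq_form A (sgn v) (sgn v)) \<le> (norm v)^2 * Re (sesq_form A \<psi> \<psi>)"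
      by (rule mult_left_mono) simp
    then show ?thesis by (subst Re_sesq_form_sgn) (simp add: mult.commute)
  qed (simp add: sesq_form_def)
  with \<psi> show ?thesis using that by simp
qed

lemma rayleigh_minimum:
  obtains \<phi> :: "complex^'n" where "norm \<phi> = 1"
    "\<And>v. Re (sesq_form A \<phi> \<phi>) * (norm v)^2 \<le> Re (sesq_form A v v)"
proof -
  obtain \<phi> :: "complex^'n" where "norm \<phi> = 1"
    and "\<And>v. Re (sesq_form (- A) v v) \<le> Re (sesq_form (- A) \<phi> \<phi>) * (norm v)^2"
    using rayleigh_maximum[of "- A"] by blast
  then show ?thesis using that by (simp add: sesq_form_uminus)
qed

lemma trace_mult_proj: "trace (A ** proj \<psi>) = sesq_form A \<psi> \<psi>"
  unfolding trace_matrix_mult proj_def sesq_form_def by (simp add: mult_ac)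

lemma proj_density:
  assumes "norm \<psi> = 1" shows "proj \<psi> \<in> density_mats"
proof -
  have "hermitian_mat (proj \<psi>)" unfolding hermitian_mat_def proj_def by (simp add: mult.commute)
  moreover have "sesq_form (proj \<psi>) v v = braket v \<psi> * cnj (braket v \<psi>)" for v
  proof -
    have "sesq_form (proj \<psi>) v v = (\<Sum>i\<in>UNIV. \<Sum>j\<in>UNIV. (cnj (v $ i) * \<psi> $ i) * (cnj (\<psi> $ j) * v $ j))"
      unfolding sesq_form_def proj_def by (simp add: mult_ac)
    also have "\<dots> = braket v \<psi> * braket \<psi> v" unfolding braket_def by (simp add: sum_product)
    finally show ?thesis by (simp add: cnj_braket)
  qed
  then have "0 \<le> Re (sesq_form (proj \<psi>) v v)" for v by (simp add: complex_norm_square[symmetric])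
  moreover have "trace (proj \<psi>) = braket \<psi> \<psi>"
    unfolding trace_def proj_def braket_def by (simp add: mult.commute)
  ultimately show ?thesis using assms by (simp add: density_mats_def psd_mat_iff braket_self)
qed

definition orthonormal_pair :: "complex^'n \<Rightarrow> complex^'n \<Rightarrow> bool" where
  "orthonormal_pair \<psi> \<phi> \<longleftrightarrow> norm \<psi> = 1 \<and> norm \<phi> = 1 \<and> braket \<psi> \<phi> = 0"

lemma norm_axis_complex: "norm (axis i (1::complex) :: complex^'n) = 1"
proof -
  have "(cmod (axis i 1 $ k))^2 = (if k = i then 1 else 0)" for k by (simp add: axis_def)
  then have "(norm (axis i (1::complex) :: complex^'n))^2 = 1" by (simp add: norm_vec_power2)
  then show ?thesis by (simp add: power2_eq_1_iff)
qed

lemma exists_orthonormal_pair: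
  assumes "CARD('n) \<ge> 2" obtains \<psi> \<phi> :: "complex^'n" where "orthonormal_pair \<psi> \<phi>"
proof -
  have "\<not> (UNIV :: 'n set) \<subseteq> {undefined}"
  proof
    assume "(UNIV :: 'n set) \<subseteq> {undefined}"
    then have "CARD('n) \<le> 1" using card_mono[of "{undefined}" UNIV] by simp
    with assms show False by simp
  qed
  then obtain i :: 'n where "i \<noteq> undefined" by blast
  moreover have "braket (axis i (1::complex)) (axis j 1) = 0" if "i \<noteq> j" for i j :: 'n
    unfolding braket_def axis_def using that by (intro sum.neutral) auto
  ultimately show ?thesis using that norm_axis_complex unfolding orthonormal_pair_def by blast
qed

lemma hermitian_extremal_pair:
  fixes A :: "complex^'n^'n"
  assumes A: "hermitian_mat A" and dim: "CARD('n) \<ge> 2"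
  obtains \<psi> \<phi> where "orthonormal_pair \<psi> \<phi>"
    "\<forall>\<rho>\<in>density_mats. \<forall>\<sigma>\<in>density_mats.
       Re (trace (A ** (\<rho> - \<sigma>))) \<le> Re (trace (A ** (proj \<psi> - proj \<phi>)))"
proof -
  obtain \<psi> where \<psi>: "norm \<psi> = 1" and max: "\<And>v. Re (sesq_form A v v) \<le> Re (sesq_form A \<psi> \<psi>) * (norm v)^2"
    using rayleigh_maximum[of A] by blast
  obtain \<phi> where \<phi>: "norm \<phi> = 1" and min: "\<And>v. Re (sesq_form A \<phi> \<phi>) * (norm v)^2 \<le> Re (sesq_form A v v)"
    using rayleigh_minimum[of A] by blast
  define l m where "l = Re (sesq_form A \<psi> \<psi>)" and "m = Re (sesq_form A \<phi> \<phi>)"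
  have ub: "Re (sesq_form A v v) \<le> l * (norm v)^2" and lb: "m * (norm v)^2 \<le> Re (sesq_form A v v)" for v
    using max[of v] min[of v] by (simp_all add: l_def m_def)
  have spread: "Re (trace (A ** (\<rho> - \<sigma>))) \<le> l - m"
    if "\<rho> \<in> density_mats" "\<sigma> \<in> density_mats" for \<rho> \<sigma>
    using Re_trace_density_le[OF A ub that(1)] Re_trace_density_ge[OF A lb that(2)]
    by (simp add: trace_mult_diff_right)
  have pure: "Re (trace (A ** (proj u - proj w))) = Re (sesq_form A u u) - Re (sesq_form A w w)" for u w
    by (simp add: trace_mult_diff_right trace_mult_proj)
  (* If l = m then A = l I and any orthonormal pair will do; otherwise the maximiser and the
     minimiser are eigenvectors for distinct eigenvalues. *)
  show ?thesis
  proof (cases "l = m")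
    case True
    obtain u w :: "complex^'n" where uw: "orthonormal_pair u w" by (rule exists_orthonormal_pair[OF dim])
    then have "m \<le> Re (sesq_form A u u)" "Re (sesq_form A w w) \<le> l"
      using lb[of u] ub[of w] by (simp_all add: orthonormal_pair_def)
    with True have "l - m \<le> Re (trace (A ** (proj u - proj w)))" unfolding pure by linarith
    with spread show ?thesis by (intro that[OF uw] ballI) (blast intro: order_trans)
  next
    case False
    have "sesq_form A v \<psi> = of_real l * braket v \<psi>" for v
      by (rule rayleigh_maximizer_eigenvector[OF A ub \<psi>]) (simp add: l_def)
    moreover have "sesq_form A v \<phi> = of_real m * braket v \<phi>" for v
      using rayleigh_maximizer_eigenvector[OF hermitian_mat_uminus[OF A], of "- m" \<phi> v] lb \<phi>
      by (simp add: sesq_form_uminus m_def)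
    ultimately have "braket \<psi> \<phi> = 0" by (rule eigenvectors_orthogonal[OF A _ _ False])
    with \<psi> \<phi> have "orthonormal_pair \<psi> \<phi>" by (simp add: orthonormal_pair_def)
    then show ?thesis by (rule that) (use spread in \<open>unfold pure l_def m_def, blast\<close>)
  qed
qed

section \<open>Reduction to orthogonal pure pairs\<close>

definition outcome_l1 :: "'i set \<Rightarrow> ('i \<Rightarrow> complex^'n^'n) \<Rightarrow> complex^'n^'n \<Rightarrow> real" where
  "outcome_l1 I M \<Delta> = (\<Sum>i\<in>I. cmod (trace (M i ** \<Delta>)))"

lemma trace_sum_scaleR_mult:
  fixes M :: "'i \<Rightarrow> complex^'n^'n"
  shows "trace ((\<Sum>i\<in>I. c i *\<^sub>R M i) ** K) = (\<Sum>i\<in>I. of_real (c i) * trace (M i ** K))"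
proof -
  have "trace ((\<Sum>i\<in>I. c i *\<^sub>R M i) ** K) =
      (\<Sum>a\<in>UNIV. \<Sum>b\<in>UNIV. \<Sum>i\<in>I. of_real (c i) * (M i $ a $ b * K $ b $ a))"
    by (simp add: trace_matrix_mult sum_distrib_right) (simp add: scaleR_conv_of_real)
  also have "\<dots> = (\<Sum>i\<in>I. of_real (c i) * trace (M i ** K))"
    by (simp add: trace_matrix_mult sum_distrib_left sum.swap[of _ "UNIV :: 'n set" I])
  finally show ?thesis .
qed

lemma Re_trace_weighted_sum_le:
  assumes "\<And>i. i \<in> I \<Longrightarrow> \<bar>c i\<bar> \<le> 1"
  shows "Re (trace ((\<Sum>i\<in>I. c i *\<^sub>R M i) ** K)) \<le> outcome_l1 I M K"
  unfolding trace_sum_scaleR_mult outcome_l1_def Re_sum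
proof (rule sum_mono)
  fix i assume "i \<in> I"
  have "Re (of_real (c i) * trace (M i ** K)) \<le> \<bar>c i\<bar> * \<bar>Re (trace (M i ** K))\<bar>"
    by (simp add: abs_mult[symmetric])
  also have "\<dots> \<le> 1 * cmod (trace (M i ** K))"
    using assms[OF \<open>i \<in> I\<close>] abs_Re_le_cmod by (intro mult_mono) auto
  finally show "Re (of_real (c i) * trace (M i ** K)) \<le> cmod (trace (M i ** K))" by simp
qed

lemma outcome_l1_sign_choice:
  assumes "\<And>i. i \<in> I \<Longrightarrow> hermitian_mat (M i)" "hermitian_mat K"
  obtains s where "s \<in> I \<rightarrow>\<^sub>E {-1, 1}" "outcome_l1 I M K = Re (trace ((\<Sum>i\<in>I. s i *\<^sub>R M i) ** K))"
proof
  define s where "s = restrict (\<lambda>i. if 0 \<le> Re (trace (M i ** K)) then 1 else - 1 :: real) I"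
  show "s \<in> I \<rightarrow>\<^sub>E {-1, 1}" unfolding s_def by auto
  have "cmod (trace (M i ** K)) = Re (of_real (s i) * trace (M i ** K))" if "i \<in> I" for i
    using trace_mult_hermitian_real[OF assms(1)[OF that] assms(2)] that
    by (simp add: s_def cmod_eq_Re)
  then show "outcome_l1 I M K = Re (trace ((\<Sum>i\<in>I. s i *\<^sub>R M i) ** K))"
    unfolding outcome_l1_def trace_sum_scaleR_mult Re_sum by (rule sum.cong[OF refl])
qed

lemma orthonormal_pairs_dominate:
  fixes M :: "'i \<Rightarrow> complex^'n^'n"
  assumes dim: "CARD('n) \<ge> 2" and "finite I" and herm: "\<And>i. i \<in> I \<Longrightarrow> hermitian_mat (M i)"
  obtains W :: "((complex^'n) \<times> (complex^'n)) set" where "finite W" "W \<noteq> {}"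
    "\<forall>(\<psi>, \<phi>) \<in> W. orthonormal_pair \<psi> \<phi>"
    "\<forall>\<rho>\<in>density_mats. \<forall>\<sigma>\<in>density_mats.
       \<exists>(\<psi>, \<phi>) \<in> W. outcome_l1 I M (\<rho> - \<sigma>) \<le> outcome_l1 I M (proj \<psi> - proj \<phi>)"
proof -
  define A where "A s = (\<Sum>i\<in>I. s i *\<^sub>R M i)" for s :: "'i \<Rightarrow> real"
  define extremal where "extremal s p \<longleftrightarrow> orthonormal_pair (fst p) (snd p) \<and>
      (\<forall>\<rho>\<in>density_mats. \<forall>\<sigma>\<in>density_mats.
        Re (trace (A s ** (\<rho> - \<sigma>))) \<le> Re (trace (A s ** (proj (fst p) - proj (snd p)))))" for s p
  define P where "P s = (SOME p. extremal s p)" for s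
  have "extremal s (P s)" for s
  proof -
    have "hermitian_mat (A s)" unfolding A_def by (intro hermitian_mat_sum hermitian_mat_scaleR herm)
    then obtain \<psi> \<phi> :: "complex^'n" where "orthonormal_pair \<psi> \<phi>"
      "\<forall>\<rho>\<in>density_mats. \<forall>\<sigma>\<in>density_mats.
         Re (trace (A s ** (\<rho> - \<sigma>))) \<le> Re (trace (A s ** (proj \<psi> - proj \<phi>)))"
      using dim by (rule hermitian_extremal_pair)
    then have "extremal s (\<psi>, \<phi>)" by (simp add: extremal_def)
    then show ?thesis unfolding P_def by (rule someI)
  qed
  then have P: "orthonormal_pair (fst (P s)) (snd (P s))"
    "\<rho> \<in> density_mats \<Longrightarrow> \<sigma> \<in> density_mats \<Longrightarrow>
       Re (trace (A s ** (\<rho> - \<sigma>))) \<le> Re (trace (A s ** (proj (fst (P s)) - proj (snd (P s)))))"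
    for s \<rho> \<sigma> by (simp_all add: extremal_def)
  define S where "S = I \<rightarrow>\<^sub>E {-1::real, 1}"
  show ?thesis
  proof (rule that[of "P ` S"])
    show "finite (P ` S)" unfolding S_def using \<open>finite I\<close> by (intro finite_imageI finite_PiE) auto
    show "P ` S \<noteq> {}" unfolding S_def by (simp add: PiE_eq_empty_iff)
    show "\<forall>(\<psi>, \<phi>) \<in> P ` S. orthonormal_pair \<psi> \<phi>"
      using P(1) by auto (metis fst_conv snd_conv)
  next
    show "\<forall>\<rho>\<in>density_mats. \<forall>\<sigma>\<in>density_mats. \<exists>(\<psi>, \<phi>) \<in> P ` S.
        outcome_l1 I M (\<rho> - \<sigma>) \<le> outcome_l1 I M (proj \<psi> - proj \<phi>)"
    proof (intro ballI)
      fix \<rho> \<sigma> :: "complex^'n^'n" assume \<rho>: "\<rho> \<in> density_mats" and \<sigma>: "\<sigma> \<in> density_mats"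
      then have "hermitian_mat (\<rho> - \<sigma>)" by (intro hermitian_mat_diff) (simp_all add: density_mats_def psd_mat_def)
      with herm obtain s where s: "s \<in> S" "outcome_l1 I M (\<rho> - \<sigma>) = Re (trace (A s ** (\<rho> - \<sigma>)))"
        unfolding S_def A_def by (rule outcome_l1_sign_choice)
      have "\<bar>s i\<bar> \<le> 1" if "i \<in> I" for i using PiE_mem[OF s(1)[unfolded S_def] that] by auto
      then have "Re (trace (A s ** (proj (fst (P s)) - proj (snd (P s))))) \<le>
          outcome_l1 I M (proj (fst (P s)) - proj (snd (P s)))"
        unfolding A_def by (rule Re_trace_weighted_sum_le)
      then have "outcome_l1 I M (\<rho> - \<sigma>) \<le> outcome_l1 I M (proj (fst (P s)) - proj (snd (P s)))"
        using s(2) P(2)[OF \<rho> \<sigma>, of s] by linarith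
      then show "\<exists>(\<psi>, \<phi>) \<in> P ` S. outcome_l1 I M (\<rho> - \<sigma>) \<le> outcome_l1 I M (proj \<psi> - proj \<phi>)"
        using \<open>s \<in> S\<close> by (auto simp: case_prod_beta)
    qed
  qed
qed

lemma best_orthonormal_pair:
  fixes M :: "'i \<Rightarrow> complex^'n^'n"
  assumes "CARD('n) \<ge> 2" and "finite I" and "\<And>i. i \<in> I \<Longrightarrow> hermitian_mat (M i)"
  obtains \<psi> \<phi> :: "complex^'n" where "orthonormal_pair \<psi> \<phi>"
    "\<forall>\<rho>\<in>density_mats. \<forall>\<sigma>\<in>density_mats. outcome_l1 I M (\<rho> - \<sigma>) \<le> outcome_l1 I M (proj \<psi> - proj \<phi>)"
proof -
  obtain W :: "((complex^'n) \<times> (complex^'n)) set"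
    where W: "finite W" "W \<noteq> {}" "\<forall>(\<psi>, \<phi>) \<in> W. orthonormal_pair \<psi> \<phi>"
    "\<forall>\<rho>\<in>density_mats. \<forall>\<sigma>\<in>density_mats.
       \<exists>(\<psi>, \<phi>) \<in> W. outcome_l1 I M (\<rho> - \<sigma>) \<le> outcome_l1 I M (proj \<psi> - proj \<phi>)"
    by (rule orthonormal_pairs_dominate[OF assms])
  define val where "val = (\<lambda>(\<psi>, \<phi>). outcome_l1 I M (proj \<psi> - proj \<phi>))"
  have "Max (val ` W) \<in> val ` W" using W(1,2) by simp
  then obtain \<psi> \<phi> where w: "(\<psi>, \<phi>) \<in> W" "val (\<psi>, \<phi>) = Max (val ` W)"
    by (metis imageE surj_pair)
  show ?thesis
  proof (rule that)
    show "orthonormal_pair \<psi> \<phi>" using w(1) W(3) by auto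
    show "\<forall>\<rho>\<in>density_mats. \<forall>\<sigma>\<in>density_mats. outcome_l1 I M (\<rho> - \<sigma>) \<le> outcome_l1 I M (proj \<psi> - proj \<phi>)"
    proof (intro ballI)
      fix \<rho> \<sigma> :: "complex^'n^'n" assume "\<rho> \<in> density_mats" "\<sigma> \<in> density_mats"
      with W(4) obtain v where "v \<in> W" "outcome_l1 I M (\<rho> - \<sigma>) \<le> val v"
        unfolding val_def split_def by blast
      then show "outcome_l1 I M (\<rho> - \<sigma>) \<le> outcome_l1 I M (proj \<psi> - proj \<phi>)"
        using W(1) w(2) by (simp add: val_def order_trans)
    qed
  qed
qed

theorem mainTheorem7:
  fixes Obs :: "'i set" and M :: "'i \<Rightarrow> complex^'n^'n"
  assumes "CARD('n) \<ge> 2"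
    and "is_POVM Obs M"
  shows "(\<exists>\<psi> \<phi> :: complex^'n. norm \<psi> = 1 \<and> norm \<phi> = 1 \<and> braket \<psi> \<phi> = 0 \<and>
            (\<Sum>i\<in>Obs. cmod (trace (M i ** (proj \<psi> - proj \<phi>)))) = 2 * Kstar Obs M)
       \<and> (\<forall>\<psi> \<phi> :: complex^'n. norm \<psi> = 1 \<and> norm \<phi> = 1 \<and> braket \<psi> \<phi> = 0 \<longrightarrow>
            (\<Sum>i\<in>Obs. cmod (trace (M i ** (proj \<psi> - proj \<phi>)))) \<le> 2 * Kstar Obs M)"
proof -
  have "finite Obs" and herm: "\<And>i. i \<in> Obs \<Longrightarrow> hermitian_mat (M i)"
    using assms(2) by (auto simp: is_POVM_def psd_mat_def)
  obtain \<psi>0 \<phi>0 where orth0: "orthonormal_pair \<psi>0 \<phi>0" and best: "\<forall>\<rho>\<in>density_mats. \<forall>\<sigma>\<in>density_mats.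
      outcome_l1 Obs M (\<rho> - \<sigma>) \<le> outcome_l1 Obs M (proj \<psi>0 - proj \<phi>0)"
    by (rule best_orthonormal_pair[OF assms(1) \<open>finite Obs\<close> herm])
  have pure: "proj \<psi> \<in> density_mats" "proj \<phi> \<in> density_mats" if "orthonormal_pair \<psi> \<phi>" for \<psi> \<phi>
    using that proj_density by (auto simp: orthonormal_pair_def)
  have "Kstar Obs M = outcome_l1 Obs M (proj \<psi>0 - proj \<phi>0) / 2"
    unfolding Kstar_def outcome_l1_def[symmetric]
  proof (rule cSup_eq_maximum)
    show "outcome_l1 Obs M (proj \<psi>0 - proj \<phi>0) / 2 \<in>
        (\<lambda>p. 1 / 2 * outcome_l1 Obs M (fst p - snd p)) ` (density_mats \<times> density_mats)"
      using pure[OF orth0] by (intro image_eqI[of _ _ "(proj \<psi>0, proj \<phi>0)"]) simp_all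
  qed (use best in auto)
  then have "outcome_l1 Obs M (proj \<psi>0 - proj \<phi>0) = 2 * Kstar Obs M" by simp
  moreover have "outcome_l1 Obs M (proj \<psi> - proj \<phi>) \<le> 2 * Kstar Obs M"
    if "orthonormal_pair \<psi> \<phi>" for \<psi> \<phi>
    using best pure[OF that] \<open>Kstar Obs M = outcome_l1 Obs M (proj \<psi>0 - proj \<phi>0) / 2\<close> by fastforce
  ultimately show ?thesis using orth0 unfolding outcome_l1_def orthonormal_pair_def by blast
qed

end
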